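(* Let $\gamma$ be the Euler–Mascheroni constant and $\zeta$ the Riemann zeta function. Then $$\lim_{x\to\infty}\left\{\zeta\Bigl(\ln\bigl[\ln(\ln\zeta(x)+1)+1\bigr]+1\Bigr)-2^x+\Bigl(\frac43\Bigr)^x-\frac12\right\}=\gamma .$$ *)

theory Defs
  imports "HOL-Analysis.Analysis"
begin

text \<open>Riemann zeta function on the real half-line s > 1, via its Dirichlet series
  zeta s = sum over n >= 1 of n^(-s). (No zeta function exists in the distribution.)
  For s <= 1 the value is the junk value of suminf; only s > 1 matters below.\<close>
definition rzeta :: "real \<Rightarrow> real" where
  "rzeta s = (\<Sum>n. 1 / (real (Suc n)) powr s)"

end

theory Submission
  imports Defs "HOL-Real_Asymp.Real_Asymp"
begin

text \<open>Near s = 1 the zeta function behaves like 1/(s - 1) + \<gamma>: comparing each term m^-s of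
  the series with the integral of t^-s over [m, m + 1], the differences are O(1/m^2) uniformly
  for 1 < s \<le> 2, and as s \<rightarrow> 1 they tend to 1/m - ln (m + 1) + ln m, whose sum is \<gamma>.
  As x \<rightarrow> \<infinity>, on the other hand, \<zeta>(x) = 1 + 2^-x + 3^-x + 4^-x + O(5^-x), and an asymptotic
  expansion shows that \<epsilon>(x) = ln (ln (ln \<zeta>(x) + 1) + 1) tends to 0 from above with
  1/\<epsilon>(x) = 2^x - (4/3)^x + 1/2 + o(1). Hence
  \<zeta>(\<epsilon>(x) + 1) = 1/\<epsilon>(x) + \<gamma> + o(1) = 2^x - (4/3)^x + 1/2 + \<gamma> + o(1).\<close>

lemma rzeta_sums:
  assumes "1 < s"
  shows "(\<lambda>n. 1 / real (Suc n) powr s) sums rzeta s"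
proof -
  have "summable (\<lambda>n. real n powr (-s))"
    using assms by (simp add: summable_real_powr_iff)
  then have "summable (\<lambda>n. 1 / real (Suc n) powr s)"
    by (subst (asm) summable_Suc_iff[symmetric]) (simp add: powr_minus_divide)
  then show ?thesis
    unfolding rzeta_def by (rule summable_sums)
qed

definition zeta_defect :: "real \<Rightarrow> real \<Rightarrow> real" where
  "zeta_defect s m = m powr -s - (m powr (1 - s) - (m + 1) powr (1 - s)) / (s - 1)"
  \<comment> \<open>m^-s minus the integral of t^-s over [m, m + 1], for s \<noteq> 1\<close>

lemma powr_integral_mean_value:
  fixes s m :: real
  assumes "1 < s" "0 < m"
  obtains \<xi> where "m < \<xi>" "\<xi> < m + 1"
    and "(m powr (1 - s) - (m + 1) powr (1 - s)) / (s - 1) = \<xi> powr -s"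
proof -
  have "\<exists>\<xi>. m < \<xi> \<and> \<xi> < m + 1 \<and>
          (m + 1) powr (1 - s) - m powr (1 - s) = (m + 1 - m) * ((1 - s) * \<xi> powr (1 - s - 1))"
  proof (rule MVT2)
    fix x assume "m \<le> x" "x \<le> m + 1"
    then show "((\<lambda>t. t powr (1 - s)) has_real_derivative (1 - s) * x powr (1 - s - 1)) (at x)"
      using assms by (intro has_real_derivative_powr) auto
  qed simp
  then show ?thesis
    using that assms by (auto simp: field_simps)
qed

lemma zeta_defect_bounds:
  fixes s m :: real
  assumes s: "1 < s" "s \<le> 2" and m: "1 \<le> m"
  shows "0 \<le> zeta_defect s m" and "zeta_defect s m \<le> 2 / m\<^sup>2"
proof -
  obtain \<xi> where \<xi>: "m < \<xi>" "\<xi> < m + 1"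
    and integral: "(m powr (1 - s) - (m + 1) powr (1 - s)) / (s - 1) = \<xi> powr -s"
    by (rule powr_integral_mean_value[of s m]) (use s m in auto)
  have "\<exists>\<eta>. m < \<eta> \<and> \<eta> < \<xi> \<and> \<xi> powr -s - m powr -s = (\<xi> - m) * (-s * \<eta> powr (-s - 1))"
  proof (rule MVT2)
    fix x assume "m \<le> x" "x \<le> \<xi>"
    then show "((\<lambda>t. t powr -s) has_real_derivative -s * x powr (-s - 1)) (at x)"
      using m by (intro has_real_derivative_powr) auto
  qed (use \<xi> in simp)
  then obtain \<eta> where \<eta>: "m < \<eta>" "\<eta> < \<xi>"
    and defect: "zeta_defect s m = (\<xi> - m) * s * \<eta> powr (-s - 1)"
    unfolding zeta_defect_def integral by (auto simp: algebra_simps)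
  show "0 \<le> zeta_defect s m"
    unfolding defect using \<eta> s by simp
  have "\<eta> powr (-s - 1) \<le> m powr (-s - 1)"
    using powr_mono2'[of "-s - 1" m \<eta>] \<eta> m s by simp
  also have "\<dots> \<le> m powr -2"
    using powr_mono[of "-s - 1" "-2" m] m s by simp
  also have "\<dots> = 1 / m\<^sup>2"
    using m by (simp add: powr_minus_divide powr_numeral)
  finally have "\<eta> powr (-s - 1) \<le> 1 / m\<^sup>2" .
  moreover have "(\<xi> - m) * s \<le> 1 * 2"
    using \<xi> s by (intro mult_mono) auto
  ultimately show "zeta_defect s m \<le> 2 / m\<^sup>2"
    unfolding defect using mult_mono[of "(\<xi> - m) * s" 2 "\<eta> powr (-s - 1)" "1 / m\<^sup>2"] \<xi> s
    by simp
qed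

lemma rzeta_minus_pole_sums:
  assumes s: "1 < s"
  shows "(\<lambda>n. zeta_defect s (real (Suc n))) sums (rzeta s - 1 / (s - 1))"
proof -
  have "(\<lambda>n. real (Suc n) powr (1 - s)) \<longlonglongrightarrow> 0"
    using s by (intro tendsto_neg_powr filterlim_compose[OF filterlim_real_sequentially filterlim_Suc]) simp
  from telescope_sums'[OF this]
  have "(\<lambda>n. (real (Suc n) powr (1 - s) - (real (Suc n) + 1) powr (1 - s)) / (s - 1)) sums (1 / (s - 1))"
    using sums_divide by fastforce
  from sums_diff[OF rzeta_sums[OF s] this] show ?thesis
    by (simp add: zeta_defect_def powr_minus_divide)
qed

lemma zeta_defect_tendsto:
  fixes m :: real
  assumes m: "0 < m"
  shows "((\<lambda>s. zeta_defect s m) \<longlongrightarrow> inverse m + ln m - ln (m + 1)) (at 1)"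
proof -
  have "((\<lambda>s. m powr (1 - s) - (m + 1) powr (1 - s)) has_real_derivative ln (m + 1) - ln m) (at 1)"
    using m by (auto intro!: derivative_eq_intros)
  then have integral:
    "((\<lambda>s. (m powr (1 - s) - (m + 1) powr (1 - s)) / (s - 1)) \<longlongrightarrow> ln (m + 1) - ln m) (at 1)"
    using m by (simp add: has_field_derivative_iff)
  have "((\<lambda>s. m powr -s) \<longlongrightarrow> inverse m) (at 1)"
    using m by (auto intro!: tendsto_eq_intros simp: powr_minus)
  from this integral have "((\<lambda>s. zeta_defect s m) \<longlongrightarrow> inverse m - (ln (m + 1) - ln m)) (at 1)"
    unfolding zeta_defect_def by (rule tendsto_diff)
  then show ?thesis
    by (simp add: algebra_simps)
qed

lemma rzeta_minus_pole_tendsto: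
  "((\<lambda>s. rzeta s - 1 / (s - 1)) \<longlongrightarrow> euler_mascheroni) (at_right 1)"
proof -
  define S :: "real set" where "S = {1<..2}"
  define f where "f n s = zeta_defect s (real (Suc n))" for n s
  have "summable (\<lambda>n. inverse (real (Suc n) ^ 2))"
    using inverse_power_summable[of 2, where 'a=real] by (subst summable_Suc_iff) simp
  from summable_mult[OF this, of 2] have "summable (\<lambda>n. 2 / (real (Suc n))\<^sup>2)"
    by (simp add: divide_inverse)
  then have unif: "uniform_limit S (\<lambda>n s. \<Sum>i<n. f i s) (\<lambda>s. \<Sum>i. f i s) sequentially"
    by (rule Weierstrass_m_test[rotated])
       (use zeta_defect_bounds in \<open>auto simp: S_def f_def simp del: of_nat_Suc\<close>)
  have "((\<lambda>s. f i s) \<longlongrightarrow> inverse (real (i + 1)) + ln (real (i + 1)) - ln (real (i + 2)))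
          (at 1 within S)" for i
    using tendsto_mono[OF at_le zeta_defect_tendsto[of "real (Suc i)"]]
    by (simp add: f_def algebra_simps)
  then have "\<forall>\<^sub>F n in sequentially. ((\<lambda>s. \<Sum>i<n. f i s) \<longlongrightarrow>
          (\<Sum>i<n. inverse (real (i + 1)) + ln (real (i + 1)) - ln (real (i + 2)))) (at 1 within S)"
    by (intro always_eventually allI tendsto_sum)
  moreover have "(\<lambda>n. \<Sum>i<n. inverse (real (i + 1)) + ln (real (i + 1)) - ln (real (i + 2)))
                   \<longlonglongrightarrow> euler_mascheroni"
    using euler_mascheroni_sum_real by (simp add: sums_def)
  ultimately have "((\<lambda>s. \<Sum>i. f i s) \<longlongrightarrow> euler_mascheroni) (at 1 within S)"
    using unif by (rule swap_uniform_limit) simp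
  moreover have "\<forall>\<^sub>F s in at 1 within S. (\<Sum>i. f i s) = rzeta s - 1 / (s - 1)"
    unfolding eventually_at_filter S_def f_def
    by (intro always_eventually)
       (auto intro!: sums_unique[symmetric] rzeta_minus_pole_sums simp del: of_nat_Suc)
  ultimately have "((\<lambda>s. rzeta s - 1 / (s - 1)) \<longlongrightarrow> euler_mascheroni) (at 1 within S)"
    by (rule Lim_transform_eventually)
  moreover have "at (1::real) within S = at_right 1"
    by (rule at_within_nhd[of _ "{0<..<2}"]) (auto simp: S_def)
  ultimately show ?thesis
    by simp
qed

definition zeta_approx :: "real \<Rightarrow> real \<Rightarrow> real" where
  "zeta_approx c x = 1 + 2 powr -x + 3 powr -x + 2 powr -x * 2 powr -x + c * 5 powr -x"
  \<comment> \<open>4^-x is written as 2^-x * 2^-x: \<open>real_asymp\<close> fails on the expansion otherwise\<close>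

lemma zeta_tail_term_le:
  fixes x k :: real
  assumes x: "2 \<le> x" and k: "0 \<le> k"
  shows "1 / (k + 5) powr x \<le> 25 * 5 powr -x * (1 / (k + 4) - 1 / (k + 5))"
proof -
  define q where "q = (k + 5) / 5"
  have q: "1 \<le> q" "5 * q = k + 5"
    using k by (simp_all add: q_def)
  have "1 / (k + 5) powr x = 5 powr -x * q powr -x"
    using powr_mult[of 5 q "-x"] q by (simp add: powr_minus_divide)
  also have "q powr -x \<le> q powr -2"
    using powr_mono[of "-x" "-2" q] q x by auto
  also have "q powr -2 = 25 / (k + 5)\<^sup>2"
    using k by (simp add: q_def powr_minus_divide powr_numeral power_divide)
  also have "\<dots> \<le> 25 / ((k + 4) * (k + 5))"
    by (rule frac_le) (use k in \<open>auto simp: power2_eq_square intro!: mult_right_mono\<close>)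
  also have "\<dots> = 25 * (1 / (k + 4) - 1 / (k + 5))"
    using k by (simp add: field_simps)
  finally show ?thesis
    by (simp add: algebra_simps)
qed

lemma rzeta_approx_bounds:
  assumes x: "2 \<le> x"
  shows "zeta_approx 0 x \<le> rzeta x" and "rzeta x \<le> zeta_approx 7 x"
proof -
  define t where "t n = 1 / real (Suc n) powr x" for n
  have t: "t sums rzeta x"
    unfolding t_def using x by (intro rzeta_sums) simp
  have split: "rzeta x = (\<Sum>n. t (n + 4)) + zeta_approx 0 x"
    using suminf_split_initial_segment[OF sums_summable[OF t], of 4] sums_unique[OF t]
      powr_mult[of 2 2 x]
    by (simp add: zeta_approx_def t_def lessThan_nat_numeral powr_minus_divide eval_nat_numeral)
  have tail_summable: "summable (\<lambda>n. t (n + 4))"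
    using sums_summable[OF t] by (rule summable_ignore_initial_segment)
  show "zeta_approx 0 x \<le> rzeta x"
    unfolding split using suminf_nonneg[OF tail_summable] by (simp add: t_def)
  have "(\<lambda>n. 1 / (real n + 4)) \<longlonglongrightarrow> 0"
    by real_asymp
  from telescope_sums'[OF this]
  have "(\<lambda>n. 1 / (real n + 4) - 1 / (real (Suc n) + 4)) sums (1 / 4)"
    by simp
  from sums_mult[OF this, of "25 * 5 powr -x"]
  have telescope:
    "(\<lambda>n. 25 * 5 powr -x * (1 / (real n + 4) - 1 / (real n + 5))) sums (25 / 4 * 5 powr -x)"
    by (simp add: add_ac)
  have "t (n + 4) \<le> 25 * 5 powr -x * (1 / (real n + 4) - 1 / (real n + 5))" for n
    using zeta_tail_term_le[of x "real n"] x by (simp add: t_def add_ac)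
  then have "(\<Sum>n. t (n + 4)) \<le> 25 / 4 * 5 powr -x"
    using suminf_le[OF _ tail_summable sums_summable[OF telescope]] sums_unique[OF telescope]
    by simp
  moreover have "0 \<le> (5::real) powr -x"
    by simp
  ultimately show "rzeta x \<le> zeta_approx 7 x"
    unfolding split zeta_approx_def by linarith
qed

definition iterated_ln :: "real \<Rightarrow> real" where
  "iterated_ln z = ln (ln (ln z + 1) + 1)"

lemma iterated_ln_pos:
  assumes "1 < z"
  shows "0 < iterated_ln z"
proof -
  have "0 < ln z"
    using assms by simp
  then have "0 < ln (ln z + 1)"
    by simp
  then show ?thesis
    by (simp add: iterated_ln_def)
qed

lemma iterated_ln_mono:
  assumes "1 < z" "z \<le> w"
  shows "iterated_ln z \<le> iterated_ln w"
proof -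
  have "0 < ln z" "ln z \<le> ln w"
    using assms by simp_all
  then have "0 < ln (ln z + 1)" "ln (ln z + 1) \<le> ln (ln w + 1)"
    by simp_all
  then show ?thesis
    by (simp add: iterated_ln_def)
qed

lemma ln_less_ln_of_power_less:
  fixes a b :: real
  assumes "0 < a" "0 < b" "a ^ m < b ^ n"
  shows "real m * ln a < real n * ln b"
  using assms by (simp flip: ln_realpow)

lemma zeta_approx_iterated_ln_asymptotics:
  shows "((\<lambda>x. 1 / iterated_ln (zeta_approx c x) - 2 powr x + (4/3) powr x - 1/2) \<longlongrightarrow> 0) at_top"
    and "((\<lambda>x. iterated_ln (zeta_approx c x)) \<longlongrightarrow> 0) at_top"
proof -
  \<comment> \<open>\<open>real_asymp\<close> needs these to compare the exponentials in the expansion\<close>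
  have ln_comparisons:
    "0 < ln (2::real)" "ln 3 < 2 * ln (2::real)" "3 * ln 2 < 2 * ln (3::real)"
    "2 * ln 2 < ln (5::real)" "2 * ln 5 < 5 * ln (2::real)" "ln 3 < ln (5::real)"
    using ln_less_ln_of_power_less[of 3 2 1 2] ln_less_ln_of_power_less[of 2 3 3 2]
      ln_less_ln_of_power_less[of 2 5 2 1] ln_less_ln_of_power_less[of 5 2 2 5]
    by simp_all
  have four_thirds_powr: "(4/3 :: real) powr x = 2 powr x * 2 powr x * 3 powr -x" for x
    by (simp add: powr_divide powr_minus_divide flip: powr_mult)
  show "((\<lambda>x. 1 / iterated_ln (zeta_approx c x) - 2 powr x + (4/3) powr x - 1/2) \<longlongrightarrow> 0) at_top"
    unfolding four_thirds_powr iterated_ln_def zeta_approx_def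
    by (real_asymp simp add: ln_comparisons field_simps)
  show "((\<lambda>x. iterated_ln (zeta_approx c x)) \<longlongrightarrow> 0) at_top"
    unfolding iterated_ln_def zeta_approx_def by (real_asymp simp add: ln_comparisons field_simps)
qed

lemma rzeta_iterated_ln_asymptotics:
  shows "((\<lambda>x. 1 / iterated_ln (rzeta x) - 2 powr x + (4/3) powr x - 1/2) \<longlongrightarrow> 0) at_top"
    and "filterlim (\<lambda>x. iterated_ln (rzeta x)) (at_right 0) at_top"
proof -
  have approx_gt_1: "1 < zeta_approx 0 x" for x
    by (simp add: zeta_approx_def add_pos_nonneg)
  have bounds: "\<forall>\<^sub>F x in at_top. 0 < iterated_ln (zeta_approx 0 x) \<and>
      iterated_ln (zeta_approx 0 x) \<le> iterated_ln (rzeta x) \<and>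
      iterated_ln (rzeta x) \<le> iterated_ln (zeta_approx 7 x)"
    using eventually_ge_at_top[of "2::real"]
    by eventually_elim
       (meson approx_gt_1 iterated_ln_pos iterated_ln_mono rzeta_approx_bounds order_less_le_trans)
  show "((\<lambda>x. 1 / iterated_ln (rzeta x) - 2 powr x + (4/3) powr x - 1/2) \<longlongrightarrow> 0) at_top"
  proof (rule tendsto_sandwich[OF _ _ zeta_approx_iterated_ln_asymptotics(1)[of 7]
                                      zeta_approx_iterated_ln_asymptotics(1)[of 0]])
    show "\<forall>\<^sub>F x in at_top. 1 / iterated_ln (zeta_approx 7 x) - 2 powr x + (4/3) powr x - 1/2
            \<le> 1 / iterated_ln (rzeta x) - 2 powr x + (4/3) powr x - 1/2"
      using bounds by eventually_elim (auto intro!: divide_left_mono mult_pos_pos)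
    show "\<forall>\<^sub>F x in at_top. 1 / iterated_ln (rzeta x) - 2 powr x + (4/3) powr x - 1/2
            \<le> 1 / iterated_ln (zeta_approx 0 x) - 2 powr x + (4/3) powr x - 1/2"
      using bounds by eventually_elim (auto intro!: divide_left_mono mult_pos_pos)
  qed
  have "((\<lambda>x. iterated_ln (rzeta x)) \<longlongrightarrow> 0) at_top"
    by (rule tendsto_sandwich[OF _ _ tendsto_const zeta_approx_iterated_ln_asymptotics(2)[of 7]])
       (use bounds in \<open>auto elim: eventually_mono\<close>)
  moreover have "\<forall>\<^sub>F x in at_top. 0 < iterated_ln (rzeta x)"
    using bounds by eventually_elim auto
  ultimately show "filterlim (\<lambda>x. iterated_ln (rzeta x)) (at_right 0) at_top"
    by (rule tendsto_imp_filterlim_at_right)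
qed

theorem mainTheorem11:
  shows "((\<lambda>x::real. rzeta (ln (ln (ln (rzeta x) + 1) + 1) + 1) - 2 powr x + (4/3) powr x - 1/2)
          \<longlongrightarrow> (euler_mascheroni :: real)) at_top"
proof -
  have "filterlim (\<lambda>\<epsilon>. \<epsilon> + 1) (at_right (1::real)) (at_right 0)"
    unfolding at_right_to_0[of 1] filterlim_def by simp
  from filterlim_compose[OF this rzeta_iterated_ln_asymptotics(2)]
  have "filterlim (\<lambda>x. iterated_ln (rzeta x) + 1) (at_right 1) at_top" .
  from filterlim_compose[OF rzeta_minus_pole_tendsto this]
  have "((\<lambda>x. rzeta (iterated_ln (rzeta x) + 1) - 1 / iterated_ln (rzeta x))
          \<longlongrightarrow> euler_mascheroni) at_top"
    by simp
  from tendsto_add[OF this rzeta_iterated_ln_asymptotics(1)] show ?thesis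
    by (simp add: iterated_ln_def algebra_simps)
qed

end
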